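(* Let $\theta,\epsilon,C,\Gamma,\boldsymbol{\Phi}$ be as below with $\boldsymbol{\Phi}(\theta)\in\overline{\mathbf{CM}}(n)$, and let $\Sigma^c_\epsilon(t)$, $t\ge0$, be the covariance of the $\theta$-periodic-in-distribution Gaussian solution, i.e. $\Sigma^c_\epsilon(t)=\boldsymbol{\Phi}(t)\big[\Sigma^c_\epsilon(0)+\epsilon\int_0^t(\boldsymbol{\Phi}^{-1}(s)\Gamma(s))(\boldsymbol{\Phi}^{-1}(s)\Gamma(s))^{\top}ds\big]\boldsymbol{\Phi}^{\top}(t)$, where $\Sigma^c_\epsilon(0)$ is the unique symmetric solution of $\boldsymbol{\Phi}(\theta)\Sigma\boldsymbol{\Phi}(\theta)^{\top}-\Sigma+\epsilon M=\mathbb{O}$. Suppose that at least one of the following holds: (i) $\xi=n$; (ii) $\eta_{k_1}=n$ for some $k_1\in\{1,\dots,\xi\}$; (iii) $\overline\xi=n$; (iv) $\overline\eta_{k_2}=n$ for some $k_2\in\{1,\dots,\overline\xi\}$. Then $\Sigma^c_\epsilon(t)$ is positive definite for every $t\ge0$.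
   Context: $\theta>0$, $\epsilon>0$; $C:[0,\infty)\to\mathbb{R}^{n\times n}$ and $\Gamma:[0,\infty)\to\mathbb{R}^{n\times N}$ are continuous and $\theta$-periodic; $\boldsymbol{\Phi}$ is the fundamental matrix $\boldsymbol{\Phi}'=C\boldsymbol{\Phi}$, $\boldsymbol{\Phi}(0)=\mathbf{I}_n$. $\overline{\mathbf{CM}}(n)$ is the set of real $n\times n$ matrices with all eigenvalues of modulus in $(0,1)$. $E_{n,j}$ is the diagonal matrix with a single $1$ in position $(j,j)$; $\mathbf{u}_j$ is the $j$-th standard basis vector of $\mathbb{R}^n$. $M:=\int_0^\theta(\boldsymbol{\Phi}(\theta)\boldsymbol{\Phi}^{-1}(t)\Gamma(t))(\boldsymbol{\Phi}(\theta)\boldsymbol{\Phi}^{-1}(t)\Gamma(t))^{\top}dt$, $\xi=\operatorname{rank}M$, and $\mathcal{G}_0$ is an orthogonal matrix with $\mathcal{G}_0M\mathcal{G}_0^{\top}=\sum_{k=1}^{\xi}\lambda_k^+E_{n,\phi_k}$, $\lambda_k^+>0$, $\phi_1<\dots<\phi_\xi$. Put $A_{[1]}=\mathcal{G}_0\boldsymbol{\Phi}(\theta)\mathcal{G}_0^{-1}$ and $\eta_k:=\dim\operatorname{span}\{A_{[1]}^j\mathbf{u}_{\phi_k}:j\ge0\}$. Further, $\lambda_\vartriangle>0$, $\overline\xi\in\{0,\dots,\xi\}$ and indices $\overline\phi_1<\dots<\overline\phi_{\overline\xi}$ in $\{1,\dots,n\}$ are chosen such that $M\succeq\lambda_\vartriangle\sum_{k=1}^{\overline\xi}E_{n,\overline\phi_k}$,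 and $\overline\eta_k:=\dim\operatorname{span}\{\boldsymbol{\Phi}(\theta)^j\mathbf{u}_{\overline\phi_k}:j\ge0\}$. *)

theory Defs
  imports "HOL-Analysis.Analysis"
begin

definition cmat :: "real^'n^'m \<Rightarrow> complex^'n^'m" where
  "cmat A = (\<chi> i j. complex_of_real (A $ i $ j))"

definition CM_bar :: "real^'n^'n \<Rightarrow> bool" where
  "CM_bar A \<longleftrightarrow> (\<forall>z::complex. det (mat z - cmat A) = 0 \<longrightarrow> 0 < cmod z \<and> cmod z < 1)"

fun mat_pow :: "'a::semiring_1^'n^'n \<Rightarrow> nat \<Rightarrow> 'a^'n^'n" where
  "mat_pow A 0 = mat 1"
| "mat_pow A (Suc k) = A ** mat_pow A k"

definition Ediag :: "'n::finite \<Rightarrow> real^'n^'n" where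
  "Ediag j = (\<chi> a b. if a = j \<and> b = j then 1 else 0)"

definition uvec :: "'n::finite \<Rightarrow> real^'n" where
  "uvec j = axis j 1"

definition psd_ge :: "real^'n^'n \<Rightarrow> real^'n^'n \<Rightarrow> bool" where
  "psd_ge A B \<longleftrightarrow> (\<forall>x. 0 \<le> x \<bullet> ((A - B) *v x))"

definition pos_def :: "real^'n^'n \<Rightarrow> bool" where
  "pos_def A \<longleftrightarrow> transpose A = A \<and> (\<forall>x. x \<noteq> 0 \<longrightarrow> 0 < x \<bullet> (A *v x))"

definition krylov_dim :: "real^'n^'n \<Rightarrow> real^'n \<Rightarrow> nat" where
  "krylov_dim A u = dim (span (range (\<lambda>j. mat_pow A j *v u)))"

end

theory Submission
  imports Defs "Jordan_Normal_Form.Spectral_Radius"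
begin

text \<open>Write \<open>\<Sigma>(t) = \<Phi>(t) (\<Sigma>(0) + \<epsilon> I(t)) \<Phi>(t)\<^sup>T\<close>, where \<open>I(t)\<close> is a Gram integral and hence
  positive semidefinite, and \<open>\<Phi>(t)\<close> is invertible by a backward Gronwall estimate; so it suffices
  that \<open>\<Sigma>(0)\<close> is positive definite. With \<open>A = \<Phi>(\<theta>)\<close> the Lyapunov equation reads
  \<open>\<Sigma>(0) = A \<Sigma>(0) A\<^sup>T + \<epsilon> M\<close>, and since the spectrum of \<open>A\<close> lies in the open unit disc, \<open>A\<^sup>k \<rightarrow> 0\<close>
  (via the Jordan form bound on matrix powers) and
  \<open>x\<^sup>T \<Sigma>(0) x \<ge> \<epsilon> x\<^sup>T A\<^sup>j M (A\<^sup>T)\<^sup>j x\<close> for every \<open>j\<close>. Each of the conditions (i)--(iv) makes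
  one of these terms positive for \<open>x \<noteq> 0\<close>: under (i) and (iii) \<open>M\<close> itself is positive definite,
  under (ii) and (iv) the form of \<open>M\<close> is coercive along a cyclic vector of \<open>A\<close> (or of a conjugate
  of \<open>A\<close> by an orthogonal matrix).\<close>

section \<open>Geometric decay of powers of a stable matrix\<close>

lemma eigenvector_smult_mat:
  assumes A: "A \<in> carrier_mat n n" and ev: "eigenvector A v k"
  shows "eigenvector (c \<cdot>\<^sub>m A) v (c * k)"
proof -
  have v: "v \<in> carrier_vec n" "A *\<^sub>v v = k \<cdot>\<^sub>v v"
    using A ev unfolding eigenvector_def by auto
  have "(c \<cdot>\<^sub>m A) *\<^sub>v v = c \<cdot>\<^sub>v (A *\<^sub>v v)"
    by (rule eq_vecI) (use v(1) A in \<open>auto simp: scalar_prod_def sum_distrib_left mult.assoc\<close>)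
  then show ?thesis using A ev unfolding eigenvector_def by (auto simp: smult_smult_assoc)
qed

lemma smult_pow_mat:
  fixes A :: "'a :: comm_semiring_1 mat"
  assumes A: "A \<in> carrier_mat n n"
  shows "(c \<cdot>\<^sub>m A) ^\<^sub>m k = c ^ k \<cdot>\<^sub>m A ^\<^sub>m k"
proof (induction k)
  case 0
  show ?case by (intro eq_matI) auto
next
  case (Suc k)
  have Ak: "A ^\<^sub>m k \<in> carrier_mat n n" using A by simp
  have "(c \<cdot>\<^sub>m A) ^\<^sub>m Suc k = (c ^ k \<cdot>\<^sub>m A ^\<^sub>m k) * (c \<cdot>\<^sub>m A)" using Suc by simp
  also have "\<dots> = c ^ k \<cdot>\<^sub>m (A ^\<^sub>m k * (c \<cdot>\<^sub>m A))"
    using Ak A by (intro mult_smult_assoc_mat) auto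
  also have "\<dots> = c ^ Suc k \<cdot>\<^sub>m A ^\<^sub>m Suc k"
    unfolding mult_smult_distrib[OF Ak A] by (intro eq_matI) (auto simp: ac_simps)
  finally show ?case .
qed

text \<open>Rescaling by a radius strictly between the spectral radius and 1 reduces geometric decay
  to the boundedness of powers of a matrix with spectral radius below 1.\<close>

lemma spectral_radius_less_1_power_decay:
  fixes A :: "complex mat"
  assumes A: "A \<in> carrier_mat n n" and n: "0 < n" and sr: "spectral_radius A < 1"
  shows "\<exists>c r. 0 < r \<and> r < 1 \<and> (\<forall>k. norm_bound (A ^\<^sub>m k) (c * r ^ k))"
proof -
  define r where "r = (spectral_radius A + 1) / 2"
  have "0 \<le> spectral_radius A" using spectral_radius_mem_max(1)[OF A n] by auto
  with sr have r: "0 < r" "r < 1" "spectral_radius A < r" unfolding r_def by auto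
  define B where "B = complex_of_real (1 / r) \<cdot>\<^sub>m A"
  have B: "B \<in> carrier_mat n n" using A by (simp add: B_def)
  have A_B: "A = complex_of_real r \<cdot>\<^sub>m B"
    using A r(1) by (intro eq_matI) (auto simp: B_def)
  have "spectral_radius B < 1"
  proof -
    obtain \<mu> where "\<mu> \<in> spectrum B" and sr_B: "spectral_radius B = cmod \<mu>"
      using spectral_radius_mem_max(1)[OF B n] by auto
    then obtain v where "eigenvector B v \<mu>" unfolding spectrum_def eigenvalue_def by auto
    from eigenvector_smult_mat[OF B this]
    have "complex_of_real r * \<mu> \<in> spectrum A"
      unfolding A_B spectrum_def eigenvalue_def by blast
    then have "cmod (complex_of_real r * \<mu>) \<le> spectral_radius A"
      using spectral_radius_mem_max(2)[OF A n] by blast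
    then have "r * cmod \<mu> \<le> spectral_radius A" using r(1) by (simp add: norm_mult)
    with r(3) have "r * cmod \<mu> < r * 1" by linarith
    with r(1) sr_B show ?thesis using mult_less_cancel_left_pos by metis
  qed
  then obtain c where c: "\<And>k. norm_bound (B ^\<^sub>m k) c"
    using spectral_radius_jnf_norm_bound_less_1_upper_triangular[OF B] by blast
  have "norm_bound (A ^\<^sub>m k) (c * r ^ k)" for k
  proof -
    have "A ^\<^sub>m k = complex_of_real r ^ k \<cdot>\<^sub>m B ^\<^sub>m k" unfolding A_B by (rule smult_pow_mat[OF B])
    then show ?thesis
      using c[of k] r(1) unfolding norm_bound_def
      by (auto simp: norm_mult norm_power mult.commute intro: mult_left_mono)
  qed
  with r show ?thesis by blast
qed

lemma mat_pow_Suc_right: "mat_pow A (Suc k) = mat_pow A k ** A"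
  by (induction k) (simp_all add: matrix_mul_assoc)

text \<open>Matrices over a finite index type are transported to the dimension-indexed matrices of the
  Jordan normal form library through an arbitrary enumeration of the index type.\<close>

definition index_enum :: "nat \<Rightarrow> 'n::finite" where
  "index_enum = (SOME h. bij_betw h {0..<CARD('n)} UNIV)"

lemma bij_betw_index_enum: "bij_betw (index_enum :: nat \<Rightarrow> 'n::finite) {0..<CARD('n)} UNIV"
  unfolding index_enum_def by (rule someI_ex[OF ex_bij_betw_nat_finite[OF finite_class.finite_UNIV]])

lemma sum_index_enum: "(\<Sum>l = 0..<CARD('n). g (index_enum l)) = (\<Sum>i\<in>UNIV. g (i :: 'n::finite))"
  using sum.reindex_bij_betw[OF bij_betw_index_enum] .

lemma index_enum_surj: obtains l where "l < CARD('n)" "index_enum l = (i :: 'n::finite)"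
  using bij_betw_index_enum[THEN bij_betw_imp_surj_on] by (metis atLeastLessThan_iff imageE UNIV_I)

definition mat_of_cart :: "'a^'n^'n::finite \<Rightarrow> 'a Matrix.mat" where
  "mat_of_cart X = Matrix.mat CARD('n) CARD('n) (\<lambda>(i, j). X $ index_enum i $ index_enum j)"

lemma mat_of_cart_dim [simp]:
  "dim_row (mat_of_cart (X :: 'a^'n^'n)) = CARD('n)" "dim_col (mat_of_cart X) = CARD('n)"
  by (simp_all add: mat_of_cart_def)

lemma mat_of_cart_carrier [simp]: "mat_of_cart (X :: 'a^'n^'n) \<in> carrier_mat CARD('n) CARD('n)"
  by (simp add: carrier_matI)

lemma mat_of_cart_mult:
  "mat_of_cart (X ** Y) = mat_of_cart X * mat_of_cart (Y :: 'a::semiring_1^'n^'n)"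
proof (rule eq_matI)
  fix i j assume "i < dim_row (mat_of_cart X * mat_of_cart Y)" "j < dim_col (mat_of_cart X * mat_of_cart Y)"
  then show "mat_of_cart (X ** Y) $$ (i, j) = (mat_of_cart X * mat_of_cart Y) $$ (i, j)"
    using sum_index_enum[of "\<lambda>k. X $ index_enum i $ k * Y $ k $ index_enum j"]
    by (simp add: mat_of_cart_def scalar_prod_def matrix_matrix_mult_def Matrix.row_def col_def)
qed simp_all

lemma mat_of_cart_one: "mat_of_cart (Finite_Cartesian_Product.mat 1 :: 'a::semiring_1^'n^'n) = 1\<^sub>m CARD('n)"
  using bij_betw_index_enum[THEN bij_betw_imp_inj_on]
  by (intro eq_matI) (auto simp: mat_of_cart_def Finite_Cartesian_Product.mat_def dest: inj_onD)

lemma mat_of_cart_mat_pow: "mat_of_cart (mat_pow X k) = mat_of_cart (X :: 'a::semiring_1^'n^'n) ^\<^sub>m k"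
  by (induction k) (simp_all add: mat_pow_Suc_right mat_of_cart_one mat_of_cart_mult del: mat_pow.simps(2))

lemma eigenvector_mat_of_cart:
  fixes X :: "'a::comm_ring_1^'n^'n"
  assumes "eigenvector (mat_of_cart X) v \<mu>"
  shows "\<exists>w. w \<noteq> 0 \<and> X *v w = \<mu> *s w"
proof -
  have v: "v \<in> carrier_vec CARD('n)" "v \<noteq> 0\<^sub>v CARD('n)" "mat_of_cart X *\<^sub>v v = \<mu> \<cdot>\<^sub>v v"
    using assms unfolding eigenvector_def by (auto simp: mat_of_cart_def)
  define w :: "'a^'n" where "w = (\<chi> i. v $ (inv_into {0..<CARD('n)} index_enum i))"
  have w_enum: "w $ index_enum l = v $ l" if "l < CARD('n)" for l
    using that bij_betw_imp_inj_on[OF bij_betw_index_enum[where 'n = 'n]] by (simp add: w_def inv_into_f_f)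
  have "(X *v w) $ index_enum l = (\<mu> *s w) $ index_enum l" if l: "l < CARD('n)" for l
  proof -
    have "(X *v w) $ index_enum l = (\<Sum>m = 0..<CARD('n). X $ index_enum l $ index_enum m * v $ m)"
      by (simp add: matrix_vector_mult_def flip: sum_index_enum) (simp add: w_enum)
    also have "\<dots> = (mat_of_cart X *\<^sub>v v) $ l"
      using l v(1) by (simp add: mat_of_cart_def scalar_prod_def Matrix.row_def)
    finally show ?thesis using l v w_enum by simp
  qed
  then have "X *v w = \<mu> *s w"
    by (metis Finite_Cartesian_Product.vec_eq_iff index_enum_surj)
  moreover have "w \<noteq> 0"
  proof
    assume "w = 0"
    then have "v $ l = 0" if "l < CARD('n)" for l using w_enum[OF that] by simp
    with v(1,2) show False by (auto intro: eq_vecI)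
  qed
  ultimately show ?thesis by blast
qed

lemma mat_pow_geometric_decay:
  fixes X :: "complex^'n^'n"
  assumes eig: "\<And>z w. w \<noteq> 0 \<Longrightarrow> X *v w = z *s w \<Longrightarrow> cmod z < 1"
  shows "\<exists>c r. 0 < r \<and> r < 1 \<and> (\<forall>k i j. cmod (mat_pow X k $ i $ j) \<le> c * r ^ k)"
proof -
  have n: "0 < CARD('n)" by simp
  have "spectral_radius (mat_of_cart X) < 1"
  proof -
    obtain \<mu> where \<mu>: "\<mu> \<in> spectrum (mat_of_cart X)"
      and sr: "spectral_radius (mat_of_cart X) = cmod \<mu>"
      using spectral_radius_mem_max(1)[OF mat_of_cart_carrier n] by auto
    from \<mu> obtain v where "eigenvector (mat_of_cart X) v \<mu>"
      unfolding spectrum_def eigenvalue_def by auto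
    then obtain w where "w \<noteq> 0" "X *v w = \<mu> *s w" using eigenvector_mat_of_cart by blast
    with eig sr show ?thesis by simp
  qed
  then obtain c r where r: "0 < r" "r < 1"
    and c: "\<And>k. norm_bound (mat_of_cart X ^\<^sub>m k) (c * r ^ k)"
    using spectral_radius_less_1_power_decay[OF mat_of_cart_carrier n] by blast
  have "cmod (mat_pow X k $ i $ j) \<le> c * r ^ k" for k i j
  proof -
    obtain a where a: "a < CARD('n)" "index_enum a = i" by (rule index_enum_surj)
    obtain b where b: "b < CARD('n)" "index_enum b = j" by (rule index_enum_surj)
    have "cmod (mat_of_cart (mat_pow X k) $$ (a, b)) \<le> c * r ^ k"
      using c[of k] a(1) b(1) unfolding norm_bound_def mat_of_cart_mat_pow by simp
    with a b show ?thesis by (simp add: mat_of_cart_def)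
  qed
  with r show ?thesis by blast
qed

hide_const (open) Matrix.orthogonal Matrix.mat Determinant.det
no_notation Matrix.vec_index (infixl "$" 100)
no_notation Matrix.scalar_prod (infix "\<bullet>" 70)


lemma cmat_mult: "cmat (A ** B) = cmat A ** cmat B"
  by (simp add: cmat_def Finite_Cartesian_Product.vec_eq_iff matrix_matrix_mult_def)

lemma cmat_one: "cmat (mat 1 :: real^'n^'n) = mat 1"
  by (simp add: cmat_def Finite_Cartesian_Product.vec_eq_iff Finite_Cartesian_Product.mat_def)

lemma cmat_mat_pow: "cmat (mat_pow A k) = mat_pow (cmat A) k"
  by (induction k) (simp_all add: cmat_one cmat_mult)

lemma CM_bar_eigenvalue:
  assumes "CM_bar A" and "w \<noteq> 0" and "cmat A *v w = z *s w"
  shows "cmod z < 1"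
proof -
  have "mat z *v w = z *s w"
    by (simp add: Finite_Cartesian_Product.vec_eq_iff matrix_vector_mult_def
        Finite_Cartesian_Product.mat_def if_distrib if_distribR cong: if_cong)
  then have "(mat z - cmat A) *v w = 0"
    using assms(3) by (simp add: matrix_vector_mult_diff_rdistrib)
  then have "\<not> invertible (mat z - cmat A)"
    using assms(2) matrix_left_invertible_ker invertible_left_inverse by blast
  then have "det (mat z - cmat A) = 0" using invertible_det_nz by blast
  then show ?thesis using assms(1) unfolding CM_bar_def by blast
qed

lemma CM_bar_transpose: "CM_bar A \<Longrightarrow> CM_bar (transpose A)"
proof -
  have "mat z - cmat (transpose A) = transpose (mat z - cmat A)" for z
    by (simp add: Finite_Cartesian_Product.vec_eq_iff transpose_def cmat_def Finite_Cartesian_Product.mat_def)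
  then show "CM_bar A \<Longrightarrow> CM_bar (transpose A)"
    unfolding CM_bar_def by (metis Determinants.det_transpose)
qed

lemma CM_bar_mat_pow_geometric_decay:
  assumes "CM_bar A"
  shows "\<exists>c r. 0 < r \<and> r < 1 \<and> (\<forall>k i j. \<bar>mat_pow A k $ i $ j\<bar> \<le> c * r ^ k)"
proof -
  obtain c r where "0 < r" "r < 1" and bound: "\<forall>k i j. cmod (mat_pow (cmat A) k $ i $ j) \<le> c * r ^ k"
    using mat_pow_geometric_decay[of "cmat A"] CM_bar_eigenvalue[OF assms] by blast
  moreover have "\<bar>mat_pow A k $ i $ j\<bar> \<le> c * r ^ k" for k i j
    using bound[rule_format, of k i j] unfolding cmat_mat_pow[symmetric] by (simp add: cmat_def)
  ultimately show ?thesis by blast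
qed

lemma norm_matrix_vector_mult_le:
  fixes A :: "real^'n^'m"
  assumes "\<And>i j. \<bar>A $ i $ j\<bar> \<le> B"
  shows "norm (A *v x) \<le> real CARD('m) * real CARD('n) * B * norm x"
proof -
  have "norm (A *v x) \<le> onorm ((*v) A) * norm x"
    by (rule onorm) simp
  also have "\<dots> \<le> real CARD('m) * real CARD('n) * B * norm x"
    by (rule mult_right_mono[OF onorm_le_matrix_component[OF assms]]) simp
  finally show ?thesis .
qed

lemma CM_bar_mat_pow_tendsto_0:
  fixes A :: "real^'n^'n"
  assumes "CM_bar A"
  shows "(\<lambda>k. mat_pow A k *v x) \<longlonglongrightarrow> 0"
proof -
  obtain c r where r: "0 < r" "r < 1" and bound: "\<And>k i j. \<bar>mat_pow A k $ i $ j\<bar> \<le> c * r ^ k"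
    using CM_bar_mat_pow_geometric_decay[OF assms] by blast
  define K where "K = real CARD('n) * real CARD('n) * c * norm x"
  have "\<forall>k. norm (mat_pow A k *v x) \<le> K * r ^ k"
    using norm_matrix_vector_mult_le[OF bound] by (simp add: K_def mult_ac)
  moreover have "(\<lambda>k. K * r ^ k) \<longlonglongrightarrow> 0"
    by (intro tendsto_mult_right_zero LIMSEQ_power_zero) (use r in auto)
  ultimately show ?thesis
    by (rule Lim_null_comparison[OF always_eventually])
qed

section \<open>Controllability and the discrete Lyapunov equation\<close>

lemma mat_pow_transpose: "mat_pow (transpose A) k = transpose (mat_pow (A :: 'a::comm_semiring_1^'n^'n) k)"
proof (induction k)
  case (Suc k)
  have "mat_pow (transpose A) (Suc k) = transpose A ** transpose (mat_pow A k)" using Suc by simp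
  also have "\<dots> = transpose (mat_pow A (Suc k))" by (simp only: matrix_transpose_mul mat_pow_Suc_right)
  finally show ?case .
qed simp

lemma mat_pow_orthogonal_conj:
  assumes "orthogonal_matrix G"
  shows "mat_pow (G ** A ** transpose G) k = G ** mat_pow A k ** transpose (G :: real^'n^'n)"
proof (induction k)
  case 0
  then show ?case using assms by (simp add: orthogonal_matrix_def)
next
  case (Suc k)
  have "mat_pow (G ** A ** transpose G) (Suc k) = (G ** A ** transpose G) ** (G ** mat_pow A k ** transpose G)"
    using Suc by simp
  also have "\<dots> = G ** A ** (transpose G ** G) ** mat_pow A k ** transpose G"
    by (simp only: matrix_mul_assoc)
  also have "\<dots> = G ** mat_pow A (Suc k) ** transpose G"
    using assms by (simp add: orthogonal_matrix_def matrix_mul_assoc)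
  finally show ?case .
qed

lemma inner_matrix_vector_transpose: "x \<bullet> (A *v y) = (transpose A *v x) \<bullet> (y :: real^'n)"
  by (simp add: dot_lmul_matrix)

lemma orthogonal_matrix_inner:
  assumes "orthogonal_matrix G"
  shows "(G *v x) \<bullet> (G *v y) = x \<bullet> (y :: real^'n)"
proof -
  have "(G *v x) \<bullet> (G *v y) = ((transpose G ** G) *v x) \<bullet> y"
    by (simp only: inner_matrix_vector_transpose[of "G *v x"] matrix_vector_mul_assoc)
  then show ?thesis using assms by (simp add: orthogonal_matrix_def)
qed

lemma orthogonal_matrix_mult_vec_eq_0_iff:
  "orthogonal_matrix G \<Longrightarrow> G *v x = 0 \<longleftrightarrow> x = (0 :: real^'n)"
  by (metis orthogonal_matrix_def matrix_vector_mul_assoc matrix_vector_mul_lid matrix_vector_mult_0_right)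

lemma orthogonal_matrix_conj_mult_vec:
  assumes "orthogonal_matrix G"
  shows "(G ** B ** transpose G) *v (G *v x) = G *v (B *v (x :: real^'n))"
proof -
  have "(G ** B ** transpose G) *v (G *v x) = (G ** B ** (transpose G ** G)) *v x"
    by (simp only: matrix_vector_mul_assoc matrix_mul_assoc)
  then show ?thesis using assms by (simp add: orthogonal_matrix_def matrix_vector_mul_assoc)
qed

lemma orthogonal_matrix_inv:
  assumes "orthogonal_matrix G"
  shows "matrix_inv G = transpose G"
proof -
  have "G ** matrix_inv G = mat 1 \<and> matrix_inv G ** G = mat 1"
    unfolding matrix_inv_def by (rule someI_ex) (use assms in \<open>auto simp: orthogonal_matrix_def\<close>)
  then have "matrix_inv G = matrix_inv G ** (G ** transpose G)"
    using assms by (simp add: orthogonal_matrix_def)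
  also have "\<dots> = transpose G" using \<open>G ** matrix_inv G = mat 1 \<and> _\<close> by (simp add: matrix_mul_assoc)
  finally show ?thesis .
qed

lemma Ediag_sum_mult_vec:
  "(\<Sum>k\<in>P. c k *\<^sub>R Ediag k) *v x = (\<chi> i. if i \<in> P then c i * x $ i else 0)"
proof -
  have entry: "(\<Sum>k\<in>P. c k *\<^sub>R Ediag k) $ i $ j = (if i = j \<and> i \<in> P then c i else 0)" for i j
    by (cases "i = j") (auto simp: Ediag_def if_distrib sum.delta cong: if_cong intro!: sum.neutral)
  show ?thesis
    unfolding matrix_vector_mult_def entry
    by (simp add: Finite_Cartesian_Product.vec_eq_iff if_distrib if_distribR sum.delta cong: if_cong)
qed

lemma Ediag_sum_quadratic_form:
  "x \<bullet> ((\<Sum>k\<in>P. c k *\<^sub>R Ediag k) *v x) = (\<Sum>k\<in>P. c k * (x $ k)\<^sup>2)"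
proof -
  have "x \<bullet> ((\<Sum>k\<in>P. c k *\<^sub>R Ediag k) *v x) = (\<Sum>i\<in>UNIV. if i \<in> P then c i * (x $ i)\<^sup>2 else 0)"
    by (simp add: Ediag_sum_mult_vec inner_vec_def if_distrib if_distribR power2_eq_square mult_ac
        cong: if_cong)
  also have "\<dots> = (\<Sum>i\<in>P. c i * (x $ i)\<^sup>2)"
    by (simp add: sum.If_cases)
  finally show ?thesis .
qed

lemma psd_ge_Ediag_sum:
  assumes "psd_ge M (c *\<^sub>R (\<Sum>k\<in>Q. Ediag k))"
  shows "c * (\<Sum>k\<in>Q. (x $ k)\<^sup>2) \<le> x \<bullet> (M *v x)"
proof -
  have "0 \<le> x \<bullet> ((M - c *\<^sub>R (\<Sum>k\<in>Q. Ediag k)) *v x)"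
    using assms unfolding psd_ge_def by blast
  also have "\<dots> = x \<bullet> (M *v x) - x \<bullet> ((\<Sum>k\<in>Q. c *\<^sub>R Ediag k) *v x)"
    by (simp add: matrix_vector_mult_diff_rdistrib inner_diff_right scaleR_sum_right)
  also have "x \<bullet> ((\<Sum>k\<in>Q. c *\<^sub>R Ediag k) *v x) = c * (\<Sum>k\<in>Q. (x $ k)\<^sup>2)"
    by (simp add: Ediag_sum_quadratic_form sum_distrib_left)
  finally show ?thesis by simp
qed

text \<open>For \<open>M = B B\<^sup>T\<close> this is controllability of the pair \<open>(A, B)\<close>: no nonzero vector is
  orthogonal to all columns of all the matrices \<open>A\<^sup>j B\<close>.\<close>

definition controllable :: "real^'n^'n \<Rightarrow> real^'n^'n \<Rightarrow> bool" where
  "controllable A M \<longleftrightarrow> (\<forall>x. x \<noteq> 0 \<longrightarrow>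
     (\<exists>j. 0 < (mat_pow (transpose A) j *v x) \<bullet> (M *v (mat_pow (transpose A) j *v x))))"

lemma controllableI_pos_def:
  assumes "\<And>x. x \<noteq> 0 \<Longrightarrow> 0 < x \<bullet> (M *v x)"
  shows "controllable A M"
  unfolding controllable_def using assms by (intro allI impI exI[of _ 0]) simp

lemma krylov_dim_full_orthogonal:
  fixes A :: "real^'n^'n"
  assumes "krylov_dim A u = CARD('n)" and "\<And>j. x \<bullet> (mat_pow A j *v u) = 0"
  shows "x = (0 :: real^'n)"
proof -
  have "dim (range (\<lambda>j. mat_pow A j *v u)) = DIM(real^'n)"
    using assms(1) unfolding krylov_dim_def by simp
  then have "span (range (\<lambda>j. mat_pow A j *v u)) = UNIV"
    by (simp only: dim_eq_full)
  then have "orthogonal x x"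
    by (intro orthogonal_to_span[of x]) (auto simp: Linear_Algebra.orthogonal_def assms(2))
  then show ?thesis by (simp add: Linear_Algebra.orthogonal_def)
qed

lemma controllableI_cyclic:
  fixes A M :: "real^'n^'n"
  assumes c: "0 < c" and M: "\<And>x. c * (u \<bullet> x)\<^sup>2 \<le> x \<bullet> (M *v x)"
    and cyclic: "krylov_dim A u = CARD('n)"
  shows "controllable A M"
  unfolding controllable_def
proof (intro allI impI)
  fix x :: "real^'n" assume "x \<noteq> 0"
  define w where "w j = mat_pow (transpose A) j *v x" for j
  show "\<exists>j. 0 < w j \<bullet> (M *v w j)" unfolding w_def[symmetric]
  proof (rule ccontr)
    assume "\<nexists>j. 0 < w j \<bullet> (M *v w j)"
    then have "c * (u \<bullet> w j)\<^sup>2 \<le> 0" for j using M[of "w j"] by (meson linorder_not_less order_trans)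
    then have "u \<bullet> w j = 0" for j using c by (simp add: mult_le_0_iff)
    moreover have "x \<bullet> (mat_pow A j *v u) = u \<bullet> w j" for j
    proof -
      have "x \<bullet> (mat_pow A j *v u) = (transpose (mat_pow A j) *v x) \<bullet> u"
        by (rule inner_matrix_vector_transpose)
      then show ?thesis by (simp only: w_def mat_pow_transpose inner_commute)
    qed
    ultimately have "x = 0" using krylov_dim_full_orthogonal[OF cyclic] by simp
    with \<open>x \<noteq> 0\<close> show False ..
  qed
qed

lemma controllable_orthogonal_conj:
  fixes A M G :: "real^'n^'n"
  assumes G: "orthogonal_matrix G"
    and "controllable (G ** A ** transpose G) (G ** M ** transpose G)"
  shows "controllable A M"
  unfolding controllable_def
proof (intro allI impI)
  fix x :: "real^'n" assume "x \<noteq> 0"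
  then have "G *v x \<noteq> 0" using orthogonal_matrix_mult_vec_eq_0_iff[OF G] by blast
  with assms(2) obtain j where j: "0 < (mat_pow (transpose (G ** A ** transpose G)) j *v (G *v x))
      \<bullet> ((G ** M ** transpose G) *v (mat_pow (transpose (G ** A ** transpose G)) j *v (G *v x)))"
    unfolding controllable_def by blast
  define w where "w = mat_pow (transpose A) j *v x"
  have "transpose (G ** A ** transpose G) = G ** transpose A ** transpose G"
    by (simp add: matrix_transpose_mul matrix_mul_assoc)
  then have "mat_pow (transpose (G ** A ** transpose G)) j *v (G *v x) = G *v w"
    by (simp add: mat_pow_orthogonal_conj[OF G] orthogonal_matrix_conj_mult_vec[OF G] w_def)
  moreover have "(G ** M ** transpose G) *v (G *v w) = G *v (M *v w)"
    by (rule orthogonal_matrix_conj_mult_vec[OF G])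
  ultimately have "0 < w \<bullet> (M *v w)" using j by (simp add: orthogonal_matrix_inner[OF G])
  then show "\<exists>j. 0 < (mat_pow (transpose A) j *v x) \<bullet> (M *v (mat_pow (transpose A) j *v x))"
    unfolding w_def by blast
qed

lemma uvec_inner: "uvec k \<bullet> x = x $ k"
  by (simp add: uvec_def inner_axis')

text \<open>Conditions (i) and (ii) are checked in the coordinates that diagonalise \<open>M\<close>.\<close>

lemma controllable_if_full_rank_or_cyclic:
  fixes A M G :: "real^'n^'n"
  assumes G: "orthogonal_matrix G"
    and G_diag: "G ** M ** transpose G = (\<Sum>k\<in>P. lam k *\<^sub>R Ediag k)"
    and lam_pos: "\<forall>k\<in>P. lam k > 0"
    and lam_tri_pos: "lam_tri > 0"
    and M_ge: "psd_ge M (lam_tri *\<^sub>R (\<Sum>k\<in>Q. Ediag k))"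
    and cases: "rank M = CARD('n)
             \<or> (\<exists>k\<in>P. krylov_dim (G ** A ** matrix_inv G) (uvec k) = CARD('n))
             \<or> card Q = CARD('n)
             \<or> (\<exists>k\<in>Q. krylov_dim A (uvec k) = CARD('n))"
  shows "controllable A M"
proof -
  define D where "D = G ** M ** transpose G"
  have D_form: "x \<bullet> (D *v x) = (\<Sum>k\<in>P. lam k * (x $ k)\<^sup>2)" for x
    by (simp add: D_def G_diag Ediag_sum_quadratic_form)
  have from_D: "controllable A M" if "controllable (G ** A ** transpose G) D"
    using controllable_orthogonal_conj[OF G] that by (simp add: D_def)
  have D_coercive: "lam k * (uvec k \<bullet> x)\<^sup>2 \<le> x \<bullet> (D *v x)" if "k \<in> P" for k x
    unfolding D_form uvec_inner using that lam_pos
    by (intro member_le_sum) (auto intro: less_imp_le)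
  have M_coercive: "lam_tri * (x \<bullet> x) \<le> x \<bullet> (M *v x)" if "Q = UNIV" for x
    using psd_ge_Ediag_sum[OF M_ge, of x] that by (simp add: inner_vec_def power2_eq_square)
  from cases show ?thesis
  proof (elim disjE)
    assume "rank M = CARD('n)"
    then have M_inj: "M *v x = 0 \<Longrightarrow> x = 0" for x
      by (metis full_rank_injective injD matrix_vector_mult_0_right)
    have D_inj: "x = 0" if "D *v x = 0" for x
    proof -
      have "G *v (M *v (transpose G *v x)) = 0"
        using that by (simp only: D_def matrix_vector_mul_assoc matrix_mul_assoc)
      then have "transpose G *v x = 0"
        using M_inj orthogonal_matrix_mult_vec_eq_0_iff[OF G] by blast
      then show "x = 0"
        using G orthogonal_matrix_mult_vec_eq_0_iff orthogonal_matrix_transpose by blast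
    qed
    have "P = UNIV"
    proof (rule ccontr)
      assume "P \<noteq> UNIV"
      then obtain a where "a \<notin> P" by blast
      then have "D *v axis a 1 = 0"
        by (simp add: D_def G_diag Ediag_sum_mult_vec Finite_Cartesian_Product.vec_eq_iff axis_def)
      then have "axis a (1 :: real) = 0" by (rule D_inj)
      then show False by (metis axis_nth zero_index zero_neq_one)
    qed
    have "0 < x \<bullet> (D *v x)" if "x \<noteq> 0" for x
    proof -
      obtain k where "x $ k \<noteq> 0" using \<open>x \<noteq> 0\<close> by (auto simp: Finite_Cartesian_Product.vec_eq_iff)
      then show ?thesis
        unfolding D_form using lam_pos \<open>P = UNIV\<close>
        by (intro sum_pos2[of _ k]) (auto simp: zero_le_mult_iff zero_less_mult_iff less_imp_le)
    qed
    then show ?thesis by (intro from_D controllableI_pos_def)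
  next
    assume "\<exists>k\<in>P. krylov_dim (G ** A ** matrix_inv G) (uvec k) = CARD('n)"
    then obtain k where "k \<in> P" "krylov_dim (G ** A ** transpose G) (uvec k) = CARD('n)"
      by (auto simp: orthogonal_matrix_inv[OF G])
    then show ?thesis
      using lam_pos D_coercive by (intro from_D controllableI_cyclic[of "lam k"]) auto
  next
    assume "card Q = CARD('n)"
    then have "Q = UNIV" using card_subset_eq[of UNIV Q] by simp
    with lam_tri_pos M_coercive show ?thesis
      by (intro controllableI_pos_def) (meson inner_gt_zero_iff less_le_trans mult_pos_pos)
  next
    assume "\<exists>k\<in>Q. krylov_dim A (uvec k) = CARD('n)"
    then obtain k where k: "k \<in> Q" "krylov_dim A (uvec k) = CARD('n)" by blast
    have "lam_tri * (uvec k \<bullet> x)\<^sup>2 \<le> x \<bullet> (M *v x)" for x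
    proof -
      have "(x $ k)\<^sup>2 \<le> (\<Sum>i\<in>Q. (x $ i)\<^sup>2)" using k(1) by (intro member_le_sum) auto
      then show ?thesis
        using psd_ge_Ediag_sum[OF M_ge, of x] lam_tri_pos uvec_inner[of k x]
        by (smt (verit) mult_left_mono)
    qed
    then show ?thesis using lam_tri_pos k(2) by (intro controllableI_cyclic)
  qed
qed

text \<open>Iterating \<open>S = A S A\<^sup>T + \<epsilon> M\<close> gives \<open>x\<^sup>T S x = w\<^sub>k\<^sup>T S w\<^sub>k + \<epsilon> \<Sum>\<^sub>j\<^sub><\<^sub>k w\<^sub>j\<^sup>T M w\<^sub>j\<close> with
  \<open>w\<^sub>j = (A\<^sup>T)\<^sup>j x\<close>; stability sends the first term to 0, and controllability makes one term of the
  sum positive.\<close>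

lemma lyapunov_solution_pos_def:
  fixes A S M :: "real^'n^'n"
  assumes stable: "CM_bar A"
    and lyap: "A ** S ** transpose A - S + \<epsilon> *\<^sub>R M = 0"
    and eps: "0 < \<epsilon>"
    and M_psd: "\<And>x. 0 \<le> x \<bullet> (M *v x)"
    and ctrl: "controllable A M"
    and S_sym: "transpose S = S"
  shows "pos_def S"
  unfolding pos_def_def
proof (intro conjI allI impI S_sym)
  fix x :: "real^'n" assume "x \<noteq> 0"
  define w where "w j = mat_pow (transpose A) j *v x" for j
  define q where "q X y = y \<bullet> (X *v y)" for X and y :: "real^'n"
  have S_eq: "S = A ** S ** transpose A + \<epsilon> *\<^sub>R M"
    using lyap by (simp add: algebra_simps eq_neg_iff_add_eq_0)
  have step: "q S y = q S (transpose A *v y) + \<epsilon> * q M y" for y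
  proof -
    have "q S y = y \<bullet> ((A ** S ** transpose A) *v y) + y \<bullet> ((\<epsilon> *\<^sub>R M) *v y)"
      unfolding q_def by (subst S_eq) (simp add: matrix_vector_mult_add_rdistrib inner_add_right)
    also have "y \<bullet> ((A ** S ** transpose A) *v y) = q S (transpose A *v y)"
      unfolding q_def
      by (simp only: matrix_vector_mul_assoc[symmetric] inner_matrix_vector_transpose[of y A])
    also have "y \<bullet> ((\<epsilon> *\<^sub>R M) *v y) = \<epsilon> * q M y"
      unfolding q_def by (simp add: scaleR_matrix_vector_assoc[symmetric])
    finally show ?thesis .
  qed
  have iterate: "q S x = q S (w k) + \<epsilon> * (\<Sum>j<k. q M (w j))" for k
  proof (induction k)
    case (Suc k)
    have "w (Suc k) = transpose A *v w k"
      by (simp add: w_def matrix_vector_mul_assoc)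
    with Suc step[of "w k"] show ?case by (simp add: algebra_simps)
  qed (simp add: w_def)
  have "(\<lambda>k. q S (w k)) \<longlonglongrightarrow> 0 \<bullet> (S *v 0)"
  proof -
    have "w \<longlonglongrightarrow> 0"
      unfolding w_def by (rule CM_bar_mat_pow_tendsto_0[OF CM_bar_transpose[OF stable]])
    then show ?thesis
      unfolding q_def by (intro tendsto_inner bounded_linear.tendsto[OF matrix_vector_mul_bounded_linear])
  qed
  then have tendsto_0: "(\<lambda>k. q S (w k)) \<longlonglongrightarrow> 0" by simp
  obtain j where j: "0 < q M (w j)"
    using ctrl \<open>x \<noteq> 0\<close> unfolding controllable_def q_def w_def by blast
  have "\<epsilon> * q M (w j) \<le> q S x"
  proof (rule LIMSEQ_le_const2)
    show "(\<lambda>k. q S (w k) + \<epsilon> * q M (w j)) \<longlonglongrightarrow> \<epsilon> * q M (w j)"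
      using tendsto_add[OF tendsto_0 tendsto_const] by simp
    have "q S (w k) + \<epsilon> * q M (w j) \<le> q S x" if "Suc j \<le> k" for k
    proof -
      have "q M (w j) \<le> (\<Sum>i<k. q M (w i))"
        using that M_psd by (intro member_le_sum) (auto simp: q_def)
      then show ?thesis using iterate[of k] eps by simp
    qed
    then show "\<exists>N. \<forall>k\<ge>N. q S (w k) + \<epsilon> * q M (w j) \<le> q S x" by blast
  qed
  with eps j show "0 < x \<bullet> (S *v x)" unfolding q_def by (smt (verit) mult_pos_pos)
qed

section \<open>Invertibility of the fundamental matrix\<close>

lemma inner_self_le_exp_if_deriv_bounded_below:
  fixes y y' :: "real \<Rightarrow> 'a::real_inner"
  assumes t: "0 \<le> t" and cont: "continuous_on {0..t} y"
    and deriv: "\<And>s. 0 < s \<Longrightarrow> s < t \<Longrightarrow> (y has_vector_derivative y' s) (at s)"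
    and bound: "\<And>s. 0 < s \<Longrightarrow> s < t \<Longrightarrow> - K * (y s \<bullet> y s) \<le> y s \<bullet> y' s"
  shows "y 0 \<bullet> y 0 \<le> (y t \<bullet> y t) * exp (2 * K * t)"
proof -
  define h where "h s = (y s \<bullet> y s) * exp (2 * K * s)" for s
  have "h 0 \<le> h t"
  proof (rule DERIV_nonneg_imp_increasing_open[OF t])
    fix s assume s: "0 < s" "s < t"
    have "(y has_derivative (\<lambda>r. r *\<^sub>R y' s)) (at s)"
      using deriv[OF s] by (simp add: has_vector_derivative_def)
    from has_derivative_inner[OF this this]
    have "((\<lambda>s. y s \<bullet> y s) has_real_derivative 2 * (y s \<bullet> y' s)) (at s)"
      unfolding has_field_derivative_def
      by (rule has_derivative_eq_rhs) (auto simp: fun_eq_iff inner_commute algebra_simps)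
    then have "(h has_real_derivative
        2 * (y s \<bullet> y' s) * exp (2 * K * s) + (y s \<bullet> y s) * (exp (2 * K * s) * (2 * K))) (at s)"
      unfolding h_def by (auto intro!: derivative_eq_intros)
    moreover have "0 \<le> 2 * (y s \<bullet> y' s) * exp (2 * K * s) + (y s \<bullet> y s) * (exp (2 * K * s) * (2 * K))"
    proof -
      have "0 \<le> (y s \<bullet> y' s + K * (y s \<bullet> y s)) * (2 * exp (2 * K * s))"
        using bound[OF s] by simp
      then show ?thesis by (simp add: algebra_simps)
    qed
    ultimately show "\<exists>d. (h has_real_derivative d) (at s) \<and> 0 \<le> d" by blast
  qed (use cont in \<open>auto simp: h_def intro!: continuous_intros\<close>)
  then show ?thesis by (simp add: h_def)
qed

lemma matrix_entry_le_norm: "\<bar>A $ i $ j\<bar> \<le> norm (A :: real^'n^'m)"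
  using component_le_norm_cart Finite_Cartesian_Product.norm_nth_le order_trans by blast

lemma bounded_linear_matrix_vector_mult_left: "bounded_linear (\<lambda>A :: real^'n^'m. A *v x)"
proof -
  have "linear (\<lambda>A :: real^'n^'m. A *v x)"
    by (rule linearI) (simp_all add: matrix_vector_mult_add_rdistrib scaleR_matrix_vector_assoc)
  then show ?thesis by (simp add: linear_conv_bounded_linear)
qed

text \<open>A solution of \<open>\<Phi>' = C \<Phi>\<close> with \<open>\<Phi>(0) = I\<close> stays invertible: if \<open>\<Phi>(t) x = 0\<close>, the
  backward growth estimate for \<open>y = \<Phi> x\<close> forces \<open>|x| = |y(0)| = 0\<close>.\<close>

lemma fundamental_matrix_invertible:
  fixes C \<Phi> :: "real \<Rightarrow> real^'n^'n"
  assumes C_cont: "continuous_on {0..} C"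
    and ode: "\<forall>t\<ge>0. (\<Phi> has_vector_derivative (C t ** \<Phi> t)) (at t within {0..})"
    and \<Phi>_0: "\<Phi> 0 = mat 1" and t: "0 \<le> t"
  shows "invertible (\<Phi> t)"
proof -
  have "compact (C ` {0..t})"
    by (rule compact_continuous_image[OF continuous_on_subset[OF C_cont] compact_Icc]) auto
  then obtain B where "\<forall>A \<in> C ` {0..t}. norm A \<le> B"
    using compact_imp_bounded bounded_iff by blast
  then have B: "norm (C s) \<le> B" if "s \<in> {0..t}" for s using that by blast
  define K where "K = real CARD('n) * real CARD('n) * B"
  have C_bound: "norm (C s *v z) \<le> K * norm z" if "s \<in> {0..t}" for s z
  proof -
    have "\<bar>C s $ i $ j\<bar> \<le> B" for i j
      using matrix_entry_le_norm[of "C s" i j] B[OF that] by linarith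
    from norm_matrix_vector_mult_le[OF this] show ?thesis by (simp add: K_def)
  qed
  have "x = 0" if x: "\<Phi> t *v x = 0" for x
  proof -
    define y where "y s = \<Phi> s *v x" for s
    have "(y has_vector_derivative C s *v y s) (at s)" if "0 < s" for s
    proof -
      have "(\<Phi> has_vector_derivative (C s ** \<Phi> s)) (at s within {0..})" using ode that by simp
      moreover have "at s within {0..} = at s" using that by (intro at_within_interior) simp
      ultimately have "(\<Phi> has_vector_derivative (C s ** \<Phi> s)) (at s)" by simp
      from bounded_linear.has_vector_derivative[OF bounded_linear_matrix_vector_mult_left this]
      show ?thesis unfolding y_def by (simp add: matrix_vector_mul_assoc)
    qed
    moreover have "continuous_on {0..t} y"
    proof -
      have "continuous_on {0..} \<Phi>"
        unfolding continuous_on_eq_continuous_within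
        using ode has_vector_derivative_continuous by blast
      then show ?thesis unfolding y_def
        by (rule bounded_linear.continuous_on[OF bounded_linear_matrix_vector_mult_left
              continuous_on_subset]) auto
    qed
    moreover have "- K * (y s \<bullet> y s) \<le> y s \<bullet> (C s *v y s)" if "0 < s" "s < t" for s
    proof -
      have "\<bar>y s \<bullet> (C s *v y s)\<bar> \<le> norm (y s) * norm (C s *v y s)"
        by (rule Cauchy_Schwarz_ineq2)
      also have "\<dots> \<le> norm (y s) * (K * norm (y s))"
        using C_bound[of s "y s"] that by (intro mult_left_mono) auto
      finally have "\<bar>y s \<bullet> (C s *v y s)\<bar> \<le> norm (y s) * (K * norm (y s))" .
      then show ?thesis by (simp add: power2_norm_eq_inner[symmetric] power2_eq_square mult_ac)
    qed
    ultimately have "y 0 \<bullet> y 0 \<le> (y t \<bullet> y t) * exp (2 * K * t)"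
      by (intro inner_self_le_exp_if_deriv_bounded_below[OF t])
    then have "x \<bullet> x \<le> 0" using x \<Phi>_0 by (simp add: y_def)
    then show "x = 0" by (metis antisym inner_ge_zero inner_eq_zero_iff)
  qed
  then show ?thesis
    using invertible_left_inverse matrix_left_invertible_ker by blast
qed

section \<open>Positive definiteness of the periodic covariance\<close>

lemma bounded_linear_transpose: "bounded_linear (transpose :: real^'n^'m \<Rightarrow> real^'m^'n)"
proof -
  have "linear (transpose :: real^'n^'m \<Rightarrow> real^'m^'n)"
    by (rule linearI) (simp_all add: transpose_def Finite_Cartesian_Product.vec_eq_iff)
  then show ?thesis by (simp add: linear_conv_bounded_linear)
qed

lemma transpose_integral_gram:
  fixes F :: "real \<Rightarrow> real^'m^'n"
  shows "transpose (integral S (\<lambda>s. F s ** transpose (F s))) = integral S (\<lambda>s. F s ** transpose (F s))"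
proof (cases "(\<lambda>s. F s ** transpose (F s)) integrable_on S")
  case True
  have "(transpose \<circ> (\<lambda>s. F s ** transpose (F s))) = (\<lambda>s. F s ** transpose (F s))"
    by (simp add: fun_eq_iff matrix_transpose_mul)
  then show ?thesis using integral_linear[OF True bounded_linear_transpose] by simp
next
  case False
  then show ?thesis
    by (simp add: not_integrable_integral transpose_def Finite_Cartesian_Product.vec_eq_iff)
qed

lemma integral_gram_psd:
  fixes F :: "real \<Rightarrow> real^'m^'n"
  shows "0 \<le> x \<bullet> (integral S (\<lambda>s. F s ** transpose (F s)) *v x)"
proof (cases "(\<lambda>s. F s ** transpose (F s)) integrable_on S")
  case True
  define q where "q A = x \<bullet> (A *v x)" for A :: "real^'n^'n"
  have q: "bounded_linear q"
    unfolding q_def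
    by (rule bounded_linear_compose[OF bounded_linear_inner_right bounded_linear_matrix_vector_mult_left])
  have "0 \<le> q (F s ** transpose (F s))" for s
  proof -
    have "q (F s ** transpose (F s)) = (transpose (F s) *v x) \<bullet> (transpose (F s) *v x)"
      unfolding q_def
      by (simp only: matrix_vector_mul_assoc[symmetric] inner_matrix_vector_transpose[of x "F s"])
    then show ?thesis by simp
  qed
  then have "0 \<le> integral S (q \<circ> (\<lambda>s. F s ** transpose (F s)))"
    by (intro integral_nonneg integrable_linear[OF True q]) simp
  then show ?thesis using integral_linear[OF True q] by (simp add: q_def)
next
  case False
  then show ?thesis by (simp add: not_integrable_integral)
qed

lemma pos_def_add_psd:
  assumes "pos_def S" and "transpose N = N" and "\<And>x. 0 \<le> x \<bullet> (N *v x)" and "0 \<le> c"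
  shows "pos_def (S + c *\<^sub>R N)"
proof -
  have "transpose (S + c *\<^sub>R N) = transpose S + c *\<^sub>R transpose N"
    by (simp add: transpose_def Finite_Cartesian_Product.vec_eq_iff)
  moreover have "x \<bullet> ((S + c *\<^sub>R N) *v x) = x \<bullet> (S *v x) + c * (x \<bullet> (N *v x))" for x
    by (simp add: matrix_vector_mult_add_rdistrib scaleR_matrix_vector_assoc[symmetric] inner_add_right)
  ultimately show ?thesis
    using assms unfolding pos_def_def by (simp add: add_pos_nonneg)
qed

lemma pos_def_congruence:
  fixes P S :: "real^'n^'n"
  assumes S: "pos_def S" and P: "invertible P"
  shows "pos_def (P ** S ** transpose P)"
  unfolding pos_def_def
proof (intro conjI allI impI)
  show "transpose (P ** S ** transpose P) = P ** S ** transpose P"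
    using S by (simp add: pos_def_def matrix_transpose_mul matrix_mul_assoc)
next
  fix x :: "real^'n" assume "x \<noteq> 0"
  have "transpose P *v x \<noteq> 0"
    using transpose_invertible[OF P] \<open>x \<noteq> 0\<close>
    by (metis invertible_left_inverse matrix_left_invertible_ker)
  then have "0 < (transpose P *v x) \<bullet> (S *v (transpose P *v x))"
    using S unfolding pos_def_def by blast
  also have "\<dots> = x \<bullet> ((P ** S ** transpose P) *v x)"
    by (simp only: inner_matrix_vector_transpose[of x P, symmetric] matrix_vector_mul_assoc matrix_mul_assoc)
  finally show "0 < x \<bullet> ((P ** S ** transpose P) *v x)" .
qed

theorem corollary3p1:
  fixes \<theta> \<epsilon> :: real
    and C :: "real \<Rightarrow> real^'n^'n"
    and \<Gamma> :: "real \<Rightarrow> real^'N^'n"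
    and \<Phi> :: "real \<Rightarrow> real^'n^'n"
    and M \<Sigma>0 G0 :: "real^'n^'n"
    and P :: "'n set" and lam :: "'n \<Rightarrow> real"
    and lam_tri :: real and Q :: "'n set"
    and \<Sigma> :: "real \<Rightarrow> real^'n^'n"
  assumes theta_pos: "\<theta> > 0" and eps_pos: "\<epsilon> > 0"
    and C_cont: "continuous_on {0..} C" and \<Gamma>_cont: "continuous_on {0..} \<Gamma>"
    and C_per: "\<forall>t\<ge>0. C (t + \<theta>) = C t"
    and \<Gamma>_per: "\<forall>t\<ge>0. \<Gamma> (t + \<theta>) = \<Gamma> t"
    and \<Phi>_ode: "\<forall>t\<ge>0. (\<Phi> has_vector_derivative (C t ** \<Phi> t)) (at t within {0..})"
    and \<Phi>_0: "\<Phi> 0 = mat 1"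
    and \<Phi>_CM: "CM_bar (\<Phi> \<theta>)"
    and M_def: "M = integral {0..\<theta>} (\<lambda>t. (\<Phi> \<theta> ** matrix_inv (\<Phi> t) ** \<Gamma> t)
                                        ** transpose (\<Phi> \<theta> ** matrix_inv (\<Phi> t) ** \<Gamma> t))"
    and G0_orth: "orthogonal_matrix G0"
    and G0_diag: "G0 ** M ** transpose G0 = (\<Sum>k\<in>P. lam k *\<^sub>R Ediag k)"
    and lam_pos: "\<forall>k\<in>P. lam k > 0"
    and lam_tri_pos: "lam_tri > 0"
    and M_ge: "psd_ge M (lam_tri *\<^sub>R (\<Sum>k\<in>Q. Ediag k))"
    and \<Sigma>0_sym: "transpose \<Sigma>0 = \<Sigma>0"
    and \<Sigma>0_lyap: "\<Phi> \<theta> ** \<Sigma>0 ** transpose (\<Phi> \<theta>) - \<Sigma>0 + \<epsilon> *\<^sub>R M = 0"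
    and \<Sigma>_def: "\<forall>t\<ge>0. \<Sigma> t = \<Phi> t ** (\<Sigma>0 + \<epsilon> *\<^sub>R integral {0..t}
               (\<lambda>s. (matrix_inv (\<Phi> s) ** \<Gamma> s) ** transpose (matrix_inv (\<Phi> s) ** \<Gamma> s)))
               ** transpose (\<Phi> t)"
    and cases: "rank M = CARD('n)
             \<or> (\<exists>k\<in>P. krylov_dim (G0 ** \<Phi> \<theta> ** matrix_inv G0) (uvec k) = CARD('n))
             \<or> card Q = CARD('n)
             \<or> (\<exists>k\<in>Q. krylov_dim (\<Phi> \<theta>) (uvec k) = CARD('n))"
  shows "\<forall>t\<ge>0. pos_def (\<Sigma> t)"
proof (intro allI impI)
  fix t :: real assume "0 \<le> t"
  have M_psd: "0 \<le> x \<bullet> (M *v x)" for x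
    by (rule order_trans[OF _ psd_ge_Ediag_sum[OF M_ge]]) (use lam_tri_pos in \<open>simp add: sum_nonneg\<close>)
  have "controllable (\<Phi> \<theta>) M"
    by (rule controllable_if_full_rank_or_cyclic[OF G0_orth G0_diag lam_pos lam_tri_pos M_ge cases])
  then have "pos_def \<Sigma>0"
    by (rule lyapunov_solution_pos_def[OF \<Phi>_CM \<Sigma>0_lyap eps_pos M_psd _ \<Sigma>0_sym])
  then have "pos_def (\<Sigma>0 + \<epsilon> *\<^sub>R integral {0..t}
      (\<lambda>s. (matrix_inv (\<Phi> s) ** \<Gamma> s) ** transpose (matrix_inv (\<Phi> s) ** \<Gamma> s)))"
    using eps_pos by (intro pos_def_add_psd transpose_integral_gram integral_gram_psd) simp_all
  moreover have "invertible (\<Phi> t)"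
    by (rule fundamental_matrix_invertible[OF C_cont \<Phi>_ode \<Phi>_0 \<open>0 \<le> t\<close>])
  ultimately show "pos_def (\<Sigma> t)"
    using \<Sigma>_def \<open>0 \<le> t\<close> by (simp add: pos_def_congruence)
qed

end
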